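(* In the fixed-flow two-parallel-path setting with $l_{P_1}<l_{P_2}$, for every integer $t\ge L$ we have $r_{ss_1}(t+1)>r_{\min}(t)$. More precisely, $r_{ss_1}(t+1)=r_{\min}(t)\gamma_s(t)$ with $$\gamma_s(t)=\frac{a(t)p_{ss_2}(t)+a(t)f_{ss_2}(t)+(1-l_{P_1})\,\beta(t)\,b_{d_2d}(t-n+1)}{p_{ss_2}(t)+f_{ss_2}(t)+(1-l_{P_2})\,b_{d_2d}(t-n+1)}>1,$$ where $a(t)=r_{ss_1}(t)/r_{\min}(t)\ge1$ and $\beta(t)=\dfrac{b_{d_1d}(t-m+1)}{b_{d_2d}(t-n+1)\,r_{\min}(t)}\ge1$.
   Context: Model (linear decision rule). Directed graph $G=(V,E)$, source $s$, destination $d$, discrete time; pheromone $p_{uv}(t)$, forward flows $f_v(t)$, backward flows $b_v(t)$; leakages $l_v\in[0,1]$; decay $\delta\in(0,1)$; exogenous inputs $f_s(t),b_d(t)$. Edge flows: $f_{uv}(t)=f_u(t)p_{uv}(t)/\sum_{z:(u,z)\in E}p_{uz}(t)$, $b_{uv}(t)=b_v(t)p_{uv}(t)/\sum_{z:(z,v)\in E}p_{zv}(t)$ (at a vertex with a single outgoing, resp. incoming, edge the whole flow goes along it). Updates: $f_v(t+1)=(1-l_v)\sum_{z:(z,v)\in E}f_{zv}(t)$ for $v\neq s$, $b_u(t+1)=(1-l_u)\sum_{z:(u,z)\in E}b_{uz}(t)$ for $u\ne d$, $p_{uv}(t+1)=\delta(p_{uv}(t)+f_{uv}(t)+b_{uv}(t))$.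 Path leakage $l_P=1-\prod_{v\in P\setminus\{s,d\}}(1-l_v)$. Two parallel paths: $G$ is the union of directed paths $P_1,P_2$ from $s$ to $d$ sharing only $s,d$; $s_1,s_2$ are the successors of $s$ and $d_1,d_2$ the predecessors of $d$ on $P_1,P_2$; $m=\mathrm{len}(P_1)$, $n=\mathrm{len}(P_2)$ (numbers of edges), $L=\max(m,n)$. Potential: $r_{ss_1}(t)=p_{ss_1}(t)/p_{ss_2}(t)$, $r_{d_1d}(t)=p_{d_1d}(t)/p_{d_2d}(t)$, and for $t\ge L$, $r_{\min}(t)=\min\{r_{ss_1}(t-i),\,r_{d_1d}(t-i):0\le i\le L-1\}$. Fixed-flow setting: $f_s(t)=\bar f>0$ and $b_d(t)=\bar b>0$ for all $t$, and all initial pheromone levels $p_{uv}(0)$ are positive. *)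

theory Defs
  imports Complex_Main
begin

definition out_weight :: "('v \<times> 'v) set \<Rightarrow> ('v \<times> 'v \<Rightarrow> real) \<Rightarrow> 'v \<Rightarrow> real" where
  "out_weight E p u = (\<Sum>z\<in>{z. (u, z) \<in> E}. p (u, z))"

definition in_weight :: "('v \<times> 'v) set \<Rightarrow> ('v \<times> 'v \<Rightarrow> real) \<Rightarrow> 'v \<Rightarrow> real" where
  "in_weight E p v = (\<Sum>z\<in>{z. (z, v) \<in> E}. p (z, v))"

definition fwd_edge :: "('v \<times> 'v) set \<Rightarrow> ('v \<times> 'v \<Rightarrow> real) \<Rightarrow> ('v \<Rightarrow> real) \<Rightarrow> 'v \<Rightarrow> 'v \<Rightarrow> real" where
  "fwd_edge E p f u v = f u * p (u, v) / out_weight E p u"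

definition bwd_edge :: "('v \<times> 'v) set \<Rightarrow> ('v \<times> 'v \<Rightarrow> real) \<Rightarrow> ('v \<Rightarrow> real) \<Rightarrow> 'v \<Rightarrow> 'v \<Rightarrow> real" where
  "bwd_edge E p b u v = b v * p (u, v) / in_weight E p v"

text \<open>Parameters: edges E, source s, destination d, leakages l, decay \<delta>,
  exogenous inputs fs (at s) and bd (at d), initial pheromone p0 and
  initial vertex flows f0, b0 (at s and d overwritten by the exogenous inputs).\<close>
fun aco_state ::
  "('v \<times> 'v) set \<Rightarrow> 'v \<Rightarrow> 'v \<Rightarrow> ('v \<Rightarrow> real) \<Rightarrow> real \<Rightarrow> (nat \<Rightarrow> real) \<Rightarrow> (nat \<Rightarrow> real)
   \<Rightarrow> ('v \<times> 'v \<Rightarrow> real) \<Rightarrow> ('v \<Rightarrow> real) \<Rightarrow> ('v \<Rightarrow> real) \<Rightarrow> nat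
   \<Rightarrow> ('v \<times> 'v \<Rightarrow> real) \<times> ('v \<Rightarrow> real) \<times> ('v \<Rightarrow> real)" where
  "aco_state E s d l \<delta> fs bd p0 f0 b0 0 = (p0, f0(s := fs 0), b0(d := bd 0))"
| "aco_state E s d l \<delta> fs bd p0 f0 b0 (Suc t) =
     (case aco_state E s d l \<delta> fs bd p0 f0 b0 t of (p, f, b) \<Rightarrow>
       ((\<lambda>(u, v). \<delta> * (p (u, v) + fwd_edge E p f u v + bwd_edge E p b u v)),
        (\<lambda>v. if v = s then fs (Suc t)
             else (1 - l v) * (\<Sum>z\<in>{z. (z, v) \<in> E}. fwd_edge E p f z v)),
        (\<lambda>u. if u = d then bd (Suc t)
             else (1 - l u) * (\<Sum>z\<in>{z. (u, z) \<in> E}. bwd_edge E p b u z))))"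

definition aco_pher where
  "aco_pher E s d l \<delta> fs bd p0 f0 b0 t = fst (aco_state E s d l \<delta> fs bd p0 f0 b0 t)"
definition aco_fwd where
  "aco_fwd E s d l \<delta> fs bd p0 f0 b0 t = fst (snd (aco_state E s d l \<delta> fs bd p0 f0 b0 t))"
definition aco_bwd where
  "aco_bwd E s d l \<delta> fs bd p0 f0 b0 t = snd (snd (aco_state E s d l \<delta> fs bd p0 f0 b0 t))"

definition path_edges :: "'v list \<Rightarrow> ('v \<times> 'v) set" where
  "path_edges P = set (zip P (tl P))"

definition path_leak :: "('v \<Rightarrow> real) \<Rightarrow> 'v list \<Rightarrow> real" where
  "path_leak l P = 1 - prod_list (map (\<lambda>v. 1 - l v) (butlast (tl P)))"

definition two_parallel_paths :: "'v list \<Rightarrow> 'v list \<Rightarrow> 'v \<Rightarrow> 'v \<Rightarrow> bool" where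
  "two_parallel_paths P1 P2 s d \<longleftrightarrow>
     distinct P1 \<and> distinct P2 \<and> length P1 \<ge> 2 \<and> length P2 \<ge> 2 \<and>
     hd P1 = s \<and> last P1 = d \<and> hd P2 = s \<and> last P2 = d \<and>
     set P1 \<inter> set P2 = {s, d}"

end

theory Submission
  imports Defs
begin

(* An inner vertex of a path has a single in-edge and a single out-edge, so backward flow travels
   along P_i one edge per step, damped by 1 - l_v at every vertex: what reaches s over (s_i, s) at
   time t is (1 - l_{P_i}) times what d sent into P_i one path length earlier. Together with
   f_{ss_1} = r_{ss_1}(t) f_{ss_2}, the update makes r_{ss_1}(t+1) a quotient of three-term sums whose
   P_1-terms dominate r_min times the P_2-terms: the pheromone and forward terms because
   r_{ss_1}(t) >= r_min, the backward term because the split of bbar at d was governed by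
   r_{d_1 d} >= r_min and because l_{P_1} < l_{P_2}. *)

lemma mem_path_edges_iff:
  "(x, y) \<in> path_edges P \<longleftrightarrow> (\<exists>i. Suc i < length P \<and> x = P ! i \<and> y = P ! Suc i)"
  unfolding path_edges_def set_zip by (force simp: nth_tl)

lemma two_parallel_paths_sym: "two_parallel_paths P Q s d \<Longrightarrow> two_parallel_paths Q P s d"
  unfolding two_parallel_paths_def by auto

lemma two_parallel_paths_nth_0: "two_parallel_paths P Q s d \<Longrightarrow> P ! 0 = s"
  unfolding two_parallel_paths_def by (metis hd_conv_nth list.size(3) not_numeral_le_zero)

lemma two_parallel_paths_nth_last: "two_parallel_paths P Q s d \<Longrightarrow> P ! (length P - 1) = d"
  unfolding two_parallel_paths_def by (metis last_conv_nth list.size(3) not_numeral_le_zero)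

lemma two_parallel_paths_inner_notin:
  assumes tp: "two_parallel_paths P Q s d" and k: "0 < k" "Suc k < length P"
  shows "P ! k \<notin> set Q"
proof
  assume "P ! k \<in> set Q"
  with k tp have "P ! k = P ! 0 \<or> P ! k = P ! (length P - 1)"
    unfolding two_parallel_paths_def
    by (metis IntI Suc_lessD insertE nth_mem singletonD two_parallel_paths_nth_0[OF tp]
        two_parallel_paths_nth_last[OF tp])
  moreover have "distinct P" using tp unfolding two_parallel_paths_def by blast
  moreover have "k < length P" "0 < length P" "length P - 1 < length P" using k by auto
  ultimately show False using k nth_eq_iff_index_eq[of P k] by fastforce
qed

lemma in_neighbours_inner:
  assumes tp: "two_parallel_paths P Q s d" and k: "0 < k" "Suc k < length P"
  shows "{z. (z, P ! k) \<in> path_edges P \<union> path_edges Q} = {P ! (k - 1)}"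
proof -
  have "distinct P" using tp unfolding two_parallel_paths_def by blast
  moreover have "P ! k \<notin> set Q" using two_parallel_paths_inner_notin[OF tp k] .
  ultimately show ?thesis using k
    by (auto simp: mem_path_edges_iff nth_eq_iff_index_eq intro!: exI[of _ "k - 1"])
qed

lemma out_neighbours_inner:
  assumes tp: "two_parallel_paths P Q s d" and k: "0 < k" "Suc k < length P"
  shows "{z. (P ! k, z) \<in> path_edges P \<union> path_edges Q} = {P ! Suc k}"
proof -
  have "distinct P" using tp unfolding two_parallel_paths_def by blast
  moreover have "P ! k \<notin> set Q" using two_parallel_paths_inner_notin[OF tp k] .
  ultimately show ?thesis using k by (auto simp: mem_path_edges_iff nth_eq_iff_index_eq)
qed

lemma out_neighbours_source_path:
  assumes tp: "two_parallel_paths P Q s d"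
  shows "{z. (s, z) \<in> path_edges P} = {P ! 1}"
proof -
  have P: "distinct P" "length P \<ge> 2" "P ! 0 = s"
    using tp two_parallel_paths_nth_0[OF tp] unfolding two_parallel_paths_def by blast+
  have "z = P ! 1" if e: "(s, z) \<in> path_edges P" for z
  proof -
    obtain i where i: "Suc i < length P" "P ! 0 = P ! i" "z = P ! Suc i"
      using e unfolding P(3)[symmetric] mem_path_edges_iff by blast
    moreover have "P \<noteq> []" using P(2) by auto
    ultimately have "i = 0" using P nth_eq_iff_index_eq[of P 0 i] by simp
    then show ?thesis using i by simp
  qed
  moreover have "(s, P ! 1) \<in> path_edges P" using P by (auto simp: mem_path_edges_iff intro!: exI[of _ 0])
  ultimately show ?thesis by blast
qed

lemma in_neighbours_dest_path:
  assumes tp: "two_parallel_paths P Q s d"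
  shows "{z. (z, d) \<in> path_edges P} = {P ! (length P - 2)}"
proof -
  have P: "distinct P" "length P \<ge> 2" "P ! (length P - 1) = d"
    using tp two_parallel_paths_nth_last[OF tp] unfolding two_parallel_paths_def by blast+
  have "z = P ! (length P - 2)" if e: "(z, d) \<in> path_edges P" for z
  proof -
    obtain i where i: "Suc i < length P" "z = P ! i" "P ! (length P - 1) = P ! Suc i"
      using e unfolding P(3)[symmetric] mem_path_edges_iff by blast
    then have "Suc i = length P - 1" using P nth_eq_iff_index_eq[of P "length P - 1" "Suc i"] by simp
    then have "i = length P - 2" by arith
    then show ?thesis using i by simp
  qed
  moreover have "(P ! (length P - 2), d) \<in> path_edges P"
  proof -
    have "Suc (length P - 2) = length P - 1" using P(2) by arith
    then show ?thesis unfolding mem_path_edges_iff using P by (intro exI[of _ "length P - 2"]) simp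
  qed
  ultimately show ?thesis by blast
qed

lemma out_neighbours_source:
  "two_parallel_paths P Q s d \<Longrightarrow> {z. (s, z) \<in> path_edges P \<union> path_edges Q} = {P ! 1, Q ! 1}"
  using out_neighbours_source_path two_parallel_paths_sym by fastforce

lemma in_neighbours_dest:
  "two_parallel_paths P Q s d \<Longrightarrow>
    {z. (z, d) \<in> path_edges P \<union> path_edges Q} = {P ! (length P - 2), Q ! (length Q - 2)}"
  using in_neighbours_dest_path two_parallel_paths_sym by fastforce

lemma two_parallel_paths_nth_neq_dest:
  assumes tp: "two_parallel_paths P Q s d" and k: "Suc k < length P"
  shows "P ! k \<noteq> d"
proof -
  have "distinct P" using tp unfolding two_parallel_paths_def by blast
  then show ?thesis using k two_parallel_paths_nth_last[OF tp] nth_eq_iff_index_eq[of P k "length P - 1"]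
    by auto
qed

lemma two_parallel_paths_single_edge:
  assumes tp: "two_parallel_paths P Q s d" and i: "Suc i < length P" and edge: "P ! i = s" "P ! Suc i = d"
  shows "P = [s, d]"
proof -
  have P: "distinct P" "length P \<ge> 2" using tp unfolding two_parallel_paths_def by blast+
  have "0 < length P" "length P - 1 < length P" using P(2) by auto
  then have "i = 0" "Suc i = length P - 1"
    using i edge P(1) two_parallel_paths_nth_0[OF tp] two_parallel_paths_nth_last[OF tp]
      nth_eq_iff_index_eq[of P i 0] nth_eq_iff_index_eq[of P "Suc i" "length P - 1"] by auto
  then have "length P = 2" by simp
  then show ?thesis using edge \<open>i = 0\<close> by (auto intro!: nth_equalityI simp: less_2_cases_iff)
qed

lemma two_parallel_paths_penultimate_neq:
  assumes tp: "two_parallel_paths P Q s d" and PQ: "P \<noteq> Q"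
  shows "P ! (length P - 2) \<noteq> Q ! (length Q - 2)"
proof
  assume eq: "P ! (length P - 2) = Q ! (length Q - 2)"
  have tq: "two_parallel_paths Q P s d" using two_parallel_paths_sym[OF tp] .
  have len: "2 \<le> length P" "2 \<le> length Q" using tp unfolding two_parallel_paths_def by auto
  have suc: "Suc (length P - 2) = length P - 1" "Suc (length Q - 2) = length Q - 1" using len by arith+
  have "P ! (length P - 2) \<in> set P \<inter> set Q" using eq len by (metis IntI diff_less nth_mem pos2
      order_less_le_trans)
  then have "P ! (length P - 2) = s \<or> P ! (length P - 2) = d"
    using tp unfolding two_parallel_paths_def by blast
  moreover have "P ! (length P - 2) \<noteq> d"
    using two_parallel_paths_nth_neq_dest[OF tp] suc len by simp
  ultimately have "P = [s, d]" "Q = [s, d]"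
    using eq len suc two_parallel_paths_single_edge[OF tp, of "length P - 2"]
      two_parallel_paths_single_edge[OF tq, of "length Q - 2"]
      two_parallel_paths_nth_last[OF tp] two_parallel_paths_nth_last[OF tq] by auto
  with PQ show False by simp
qed

lemma one_minus_path_leak_nonneg:
  assumes "\<forall>v \<in> set P. 0 \<le> l v \<and> l v \<le> 1"
  shows "0 \<le> 1 - path_leak l P"
proof -
  have "set (butlast (tl P)) \<subseteq> set P" by (metis in_set_butlastD list.set_sel(2) subsetI tl_Nil)
  then show ?thesis
    using assms unfolding path_leak_def by (force intro!: prod_list_nonneg)
qed

lemma fwd_edge_nonneg:
  assumes "\<forall>e\<in>E. 0 < p e" "(u, v) \<in> E" "0 \<le> f u"
  shows "0 \<le> fwd_edge E p f u v"
  using assms unfolding fwd_edge_def out_weight_def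
  by (intro divide_nonneg_nonneg mult_nonneg_nonneg sum_nonneg) (auto intro: less_imp_le)

lemma bwd_edge_nonneg:
  assumes "\<forall>e\<in>E. 0 < p e" "(u, v) \<in> E" "0 \<le> b v"
  shows "0 \<le> bwd_edge E p b u v"
  using assms unfolding bwd_edge_def in_weight_def
  by (intro divide_nonneg_nonneg mult_nonneg_nonneg sum_nonneg) (auto intro: less_imp_le)

lemma fwd_edge_ratio:
  assumes "0 < p (u, w)"
  shows "fwd_edge E p f u v = p (u, v) / p (u, w) * fwd_edge E p f u w"
  using assms unfolding fwd_edge_def by simp

lemma bwd_edge_sole_in_edge:
  assumes "{z. (z, v) \<in> E} = {u}" "0 < p (u, v)"
  shows "bwd_edge E p b u v = b v"
  using assms unfolding bwd_edge_def in_weight_def by simp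

lemma bwd_edge_two_in_edges:
  assumes "{z. (z, v) \<in> E} = {u, w}" "u \<noteq> w"
  shows "bwd_edge E p b u v = b v * (p (u, v) / (p (u, v) + p (w, v)))"
  using assms unfolding bwd_edge_def in_weight_def by simp

lemma share_le_share_of_ratio_bounds:
  fixes A B C D r :: real
  assumes "0 < A" "0 < B" "0 < C" "0 < D" "0 < r" "r \<le> A / B" "r \<le> C / D"
  shows "r * (D / (C + D)) \<le> A / (A + B)"
proof -
  have "r * B \<le> A" "r * D \<le> C" using assms by (simp_all add: field_simps)
  then have "r * (D / (C + D)) \<le> r / (1 + r)" "r / (1 + r) \<le> A / (A + B)"
    using assms by (simp_all add: field_simps)
  then show ?thesis by linarith
qed

lemma window_min_pos:
  fixes g h :: "nat \<Rightarrow> real"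
  assumes "\<And>\<tau>. 0 < g \<tau>" "\<And>\<tau>. 0 < h \<tau>" "0 < L"
  shows "0 < Min ({g (t - i) | i. i < L} \<union> {h (t - i) | i. i < L})"
proof -
  have "g t \<in> {g (t - i) | i. i < L}" using assms(3) by force
  then show ?thesis using assms(1,2) by (subst Min_gr_iff) auto
qed

lemma window_min_le:
  fixes g h :: "nat \<Rightarrow> real"
  assumes "i < L"
  shows "Min ({g (t - i) | i. i < L} \<union> {h (t - i) | i. i < L}) \<le> g (t - i)"
    and "Min ({g (t - i) | i. i < L} \<union> {h (t - i) | i. i < L}) \<le> h (t - i)"
  using assms by (auto intro!: Min_le)

(* The quotient in the last claim is the update of r_{ss_1}; a, beta and gamma are the quantities
   of the theorem, relative to the lower bound r. *)
lemma ratio_gain_factor: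
  fixes r p1 p2 f2 b1 b2 c1 c2 a \<beta> \<gamma> :: real
  assumes "0 < r" "0 < p2" "0 \<le> f2" "0 < b2" "0 \<le> c2" "c2 < c1"
    and "r \<le> p1 / p2" "r * b2 \<le> b1"
    and a_def: "a = p1 / p2 / r" and \<beta>_def: "\<beta> = b1 / (b2 * r)"
    and \<gamma>_def: "\<gamma> = (a * p2 + a * f2 + c1 * \<beta> * b2) / (p2 + f2 + c2 * b2)"
  shows "1 \<le> a" "1 \<le> \<beta>" "1 < \<gamma>"
    and "(p1 + p1 / p2 * f2 + c1 * b1) / (p2 + f2 + c2 * b2) = r * \<gamma>"
proof -
  show a: "1 \<le> a" and \<beta>: "1 \<le> \<beta>"
    using assms(1-8) unfolding a_def \<beta>_def by (simp_all add: field_simps)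
  have "p2 + f2 + c2 * b2 < a * p2 + a * f2 + c1 * \<beta> * b2"
  proof -
    have "p2 \<le> a * p2" "f2 \<le> a * f2" using a assms(2,3) by (simp_all add: mult_le_cancel_right1)
    moreover have "c2 * b2 < c1 * b2" "c1 \<le> c1 * \<beta>"
      using assms(4-6) \<beta> by (simp_all add: mult_le_cancel_left1)
    ultimately show ?thesis using assms(4) by (smt (verit) mult_right_mono)
  qed
  moreover have "0 < p2 + f2 + c2 * b2" using assms(2-5) by (simp add: add_pos_nonneg)
  ultimately show "1 < \<gamma>" unfolding \<gamma>_def by simp
  have "r * (a * p2 + a * f2 + c1 * \<beta> * b2) = p1 + p1 / p2 * f2 + c1 * b1"
    using assms(1,2,4) unfolding a_def \<beta>_def by (simp add: field_simps)
  then show "(p1 + p1 / p2 * f2 + c1 * b1) / (p2 + f2 + c2 * b2) = r * \<gamma>"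
    unfolding \<gamma>_def by simp
qed

locale fixed_flow_colony =
  fixes E :: "('v \<times> 'v) set" and s d :: 'v and P1 P2 :: "'v list"
    and l :: "'v \<Rightarrow> real" and \<delta> fbar bbar :: real
    and p0 :: "'v \<times> 'v \<Rightarrow> real" and f0 b0 :: "'v \<Rightarrow> real"
    and p :: "nat \<Rightarrow> 'v \<times> 'v \<Rightarrow> real" and f b :: "nat \<Rightarrow> 'v \<Rightarrow> real"
  assumes paths: "two_parallel_paths P1 P2 s d"
    and E_def: "E = path_edges P1 \<union> path_edges P2"
    and leak: "\<forall>v \<in> set P1 \<union> set P2. 0 \<le> l v \<and> l v \<le> 1"
    and decay: "0 < \<delta>"
    and inputs: "fbar > 0" "bbar > 0"
    and p0_pos: "\<forall>e \<in> E. p0 e > 0"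
    and init_flows: "\<forall>v \<in> set P1 \<union> set P2. f0 v \<ge> 0 \<and> b0 v \<ge> 0"
    and p_def: "p = aco_pher E s d l \<delta> (\<lambda>_. fbar) (\<lambda>_. bbar) p0 f0 b0"
    and f_def: "f = aco_fwd E s d l \<delta> (\<lambda>_. fbar) (\<lambda>_. bbar) p0 f0 b0"
    and b_def: "b = aco_bwd E s d l \<delta> (\<lambda>_. fbar) (\<lambda>_. bbar) p0 f0 b0"
begin

lemma aco_state_eq: "aco_state E s d l \<delta> (\<lambda>_. fbar) (\<lambda>_. bbar) p0 f0 b0 t = (p t, f t, b t)"
  by (simp add: p_def f_def b_def aco_pher_def aco_fwd_def aco_bwd_def)

lemma pher_0: "p 0 = p0"
  and fwd_0: "f 0 v = (if v = s then fbar else f0 v)"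
  and bwd_0: "b 0 v = (if v = d then bbar else b0 v)"
  by (simp_all add: p_def f_def b_def aco_pher_def aco_fwd_def aco_bwd_def)

lemma pher_Suc:
  "p (Suc t) (u, v) = \<delta> * (p t (u, v) + fwd_edge E (p t) (f t) u v + bwd_edge E (p t) (b t) u v)"
proof -
  have "p (Suc t) = fst (aco_state E s d l \<delta> (\<lambda>_. fbar) (\<lambda>_. bbar) p0 f0 b0 (Suc t))"
    by (simp add: p_def aco_pher_def)
  then show ?thesis by (simp add: aco_state_eq)
qed

lemma fwd_Suc: "f (Suc t) v =
    (if v = s then fbar else (1 - l v) * (\<Sum>z\<in>{z. (z, v) \<in> E}. fwd_edge E (p t) (f t) z v))"
proof -
  have "f (Suc t) = fst (snd (aco_state E s d l \<delta> (\<lambda>_. fbar) (\<lambda>_. bbar) p0 f0 b0 (Suc t)))"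
    by (simp add: f_def aco_fwd_def)
  then show ?thesis by (simp add: aco_state_eq)
qed

lemma bwd_Suc: "b (Suc t) u =
    (if u = d then bbar else (1 - l u) * (\<Sum>z\<in>{z. (u, z) \<in> E}. bwd_edge E (p t) (b t) u z))"
proof -
  have "b (Suc t) = snd (snd (aco_state E s d l \<delta> (\<lambda>_. fbar) (\<lambda>_. bbar) p0 f0 b0 (Suc t)))"
    by (simp add: b_def aco_bwd_def)
  then show ?thesis by (simp add: aco_state_eq)
qed

lemma bwd_dest: "b t d = bbar"
  by (cases t) (simp_all add: bwd_0 bwd_Suc)

lemma edge_vertices: "(u, v) \<in> E \<Longrightarrow> u \<in> set P1 \<union> set P2 \<and> v \<in> set P1 \<union> set P2"
  unfolding E_def by (auto simp: mem_path_edges_iff)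

lemma positivity_invariant:
  "(\<forall>e\<in>E. 0 < p t e) \<and> (\<forall>v \<in> set P1 \<union> set P2. 0 \<le> f t v \<and> 0 \<le> b t v)"
proof (induction t)
  case 0
  then show ?case using p0_pos init_flows inputs by (auto simp: pher_0 fwd_0 bwd_0)
next
  case (Suc t)
  have pos: "\<forall>e\<in>E. 0 < p t e" using Suc.IH by blast
  have fwd: "0 \<le> fwd_edge E (p t) (f t) u v" and bwd: "0 \<le> bwd_edge E (p t) (b t) u v"
    if e: "(u, v) \<in> E" for u v
  proof -
    have "0 \<le> f t u" "0 \<le> b t v" using Suc.IH edge_vertices[OF e] by blast+
    then show "0 \<le> fwd_edge E (p t) (f t) u v" "0 \<le> bwd_edge E (p t) (b t) u v"
      using fwd_edge_nonneg[OF pos e] bwd_edge_nonneg[OF pos e] by blast+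
  qed
  have "0 < p (Suc t) e" if e: "e \<in> E" for e
  proof -
    obtain u v where uv: "e = (u, v)" by fastforce
    have "0 < p t (u, v)" "(u, v) \<in> E" using pos e uv by auto
    then show ?thesis
      using fwd[of u v] bwd[of u v] decay unfolding uv pher_Suc
      by (intro mult_pos_pos add_pos_nonneg) auto
  qed
  moreover have "0 \<le> f (Suc t) v \<and> 0 \<le> b (Suc t) v" if "v \<in> set P1 \<union> set P2" for v
  proof -
    have "0 \<le> 1 - l v" using that leak by auto
    moreover have "0 \<le> (\<Sum>z\<in>{z. (z, v) \<in> E}. fwd_edge E (p t) (f t) z v)"
      "0 \<le> (\<Sum>z\<in>{z. (v, z) \<in> E}. bwd_edge E (p t) (b t) v z)"
      using fwd bwd by (auto intro!: sum_nonneg)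
    ultimately show ?thesis
      unfolding fwd_Suc bwd_Suc using inputs by (smt (verit) mult_nonneg_nonneg)
  qed
  ultimately show ?case by blast
qed

lemma pher_pos: "e \<in> E \<Longrightarrow> 0 < p t e"
  using positivity_invariant by blast

lemma fwd_edge_flow_nonneg:
  assumes "(u, v) \<in> E"
  shows "0 \<le> fwd_edge E (p t) (f t) u v"
proof -
  have "0 \<le> f t u" using positivity_invariant edge_vertices[OF assms] by blast
  then show ?thesis using fwd_edge_nonneg[OF _ assms] pher_pos by blast
qed

lemma bwd_flow_along_path:
  assumes tp: "two_parallel_paths P Q s d" and EPQ: "E = path_edges P \<union> path_edges Q"
    and k: "0 < k" "k \<le> length P - 2"
  shows "b (\<tau> + (length P - 1 - k)) (P ! k) =
    prod_list (map (\<lambda>v. 1 - l v) (drop k (butlast P))) * bwd_edge E (p \<tau>) (b \<tau>) (P ! (length P - 2)) d"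
  using k(2,1)
proof (induction rule: inc_induct)
  case base
  have len: "Suc (length P - 2) = length P - 1" "Suc (length P - 2) < length P"
    using k by linarith+
  have "P ! Suc (length P - 2) = d" using two_parallel_paths_nth_last[OF tp] len(1) by metis
  then have out: "{z. (P ! (length P - 2), z) \<in> E} = {d}"
    using out_neighbours_inner[OF tp base len(2)] unfolding EPQ by (simp only:)
  have "length (butlast P) = Suc (length P - 2)" using k by simp
  then have "drop (length P - 2) (butlast P) = [butlast P ! (length P - 2)]"
    by (metis Cons_nth_drop_Suc drop_all lessI order_refl)
  moreover have "butlast P ! (length P - 2) = P ! (length P - 2)"
    using k by (simp add: nth_butlast)
  ultimately have drop: "drop (length P - 2) (butlast P) = [P ! (length P - 2)]" by simp
  have time: "\<tau> + (length P - 1 - (length P - 2)) = Suc \<tau>" using len by linarith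
  have "b (Suc \<tau>) (P ! (length P - 2)) =
      (1 - l (P ! (length P - 2))) * bwd_edge E (p \<tau>) (b \<tau>) (P ! (length P - 2)) d"
    using out two_parallel_paths_nth_neq_dest[OF tp len(2)] by (simp add: bwd_Suc)
  then show ?case unfolding time drop by simp
next
  case (step n)
  have n: "0 < n" "Suc n < length P" "Suc (Suc n) < length P" using step by linarith+
  have out: "{z. (P ! n, z) \<in> E} = {P ! Suc n}"
    using out_neighbours_inner[OF tp n(1,2)] unfolding EPQ .
  have "{z. (z, P ! Suc n) \<in> E} = {P ! n}"
    using in_neighbours_inner[OF tp _ n(3)] unfolding EPQ by simp
  moreover have "0 < p t (P ! n, P ! Suc n)" for t using out pher_pos by blast
  ultimately have sole: "bwd_edge E (p t) (b t) (P ! n) (P ! Suc n) = b t (P ! Suc n)" for t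
    by (rule bwd_edge_sole_in_edge)
  have time: "\<tau> + (length P - 1 - n) = Suc (\<tau> + (length P - 1 - Suc n))" using n by linarith
  have drop: "drop n (butlast P) = P ! n # drop (Suc n) (butlast P)"
    using n by (metis Cons_nth_drop_Suc length_butlast less_diff_conv nth_butlast Suc_eq_plus1)
  have "b (\<tau> + (length P - 1 - n)) (P ! n) = (1 - l (P ! n)) * b (\<tau> + (length P - 1 - Suc n)) (P ! Suc n)"
    unfolding time using out sole two_parallel_paths_nth_neq_dest[OF tp n(2)] by (simp add: bwd_Suc)
  then show ?case using step.IH unfolding drop by simp
qed

lemma bwd_source_edge:
  assumes tp: "two_parallel_paths P Q s d" and EPQ: "E = path_edges P \<union> path_edges Q"
    and t: "length P - 1 \<le> t"
  shows "bwd_edge E (p t) (b t) s (P ! 1) = (1 - path_leak l P) *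
    bwd_edge E (p (t - (length P - 1) + 1)) (b (t - (length P - 1) + 1)) (P ! (length P - 2)) d"
proof (cases "length P = 2")
  case True
  then have "P = [s, d]"
    using two_parallel_paths_single_edge[OF tp, of 0] two_parallel_paths_nth_0[OF tp]
      two_parallel_paths_nth_last[OF tp] by simp
  then show ?thesis using t by (simp add: path_leak_def)
next
  case False
  then have len: "1 \<le> length P - 2" "Suc 1 < length P"
    using tp unfolding two_parallel_paths_def by linarith+
  have "{z. (z, P ! 1) \<in> E} = {s}"
    using in_neighbours_inner[OF tp _ len(2)] two_parallel_paths_nth_0[OF tp] unfolding EPQ by simp
  moreover have "0 < p t (s, P ! 1)" using calculation pher_pos by blast
  ultimately have "bwd_edge E (p t) (b t) s (P ! 1) = b t (P ! 1)"
    by (rule bwd_edge_sole_in_edge)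
  moreover have "t - (length P - 1) + 1 + (length P - 1 - 1) = t" using t len by linarith
  moreover have "1 - path_leak l P = prod_list (map (\<lambda>v. 1 - l v) (drop 1 (butlast P)))"
    by (simp add: path_leak_def butlast_tl drop_Suc)
  ultimately show ?thesis
    using bwd_flow_along_path[OF tp EPQ _ len(1), of "t - (length P - 1) + 1"] by simp
qed

abbreviation "s1 \<equiv> P1 ! 1"
abbreviation "s2 \<equiv> P2 ! 1"
abbreviation "d1 \<equiv> P1 ! (length P1 - 2)"
abbreviation "d2 \<equiv> P2 ! (length P2 - 2)"

lemma source_edges: "(s, s1) \<in> E" "(s, s2) \<in> E"
  using out_neighbours_source[OF paths] unfolding E_def by blast+

lemma dest_edges: "(d1, d) \<in> E" "(d2, d) \<in> E"
  using in_neighbours_dest[OF paths] unfolding E_def by blast+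

lemma bwd_dest_edges:
  assumes "P1 \<noteq> P2"
  shows "bwd_edge E (p \<tau>) (b \<tau>) d1 d = bbar * (p \<tau> (d1, d) / (p \<tau> (d1, d) + p \<tau> (d2, d)))"
    and "bwd_edge E (p \<tau>) (b \<tau>) d2 d = bbar * (p \<tau> (d2, d) / (p \<tau> (d2, d) + p \<tau> (d1, d)))"
proof -
  have "{z. (z, d) \<in> E} = {d1, d2}" "{z. (z, d) \<in> E} = {d2, d1}"
    using in_neighbours_dest[OF paths] unfolding E_def by auto
  then show "bwd_edge E (p \<tau>) (b \<tau>) d1 d = bbar * (p \<tau> (d1, d) / (p \<tau> (d1, d) + p \<tau> (d2, d)))"
    "bwd_edge E (p \<tau>) (b \<tau>) d2 d = bbar * (p \<tau> (d2, d) / (p \<tau> (d2, d) + p \<tau> (d1, d)))"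
    using bwd_edge_two_in_edges two_parallel_paths_penultimate_neq[OF paths assms] bwd_dest
    by metis+
qed

lemma bwd_dest_pos: "P1 \<noteq> P2 \<Longrightarrow> 0 < bwd_edge E (p \<tau>) (b \<tau>) d2 d"
  using bwd_dest_edges(2) pher_pos dest_edges inputs by (simp add: add_pos_pos)

lemma bwd_dest_ratio_bound:
  assumes "P1 \<noteq> P2" "0 < r" "r \<le> p \<tau>1 (d1, d) / p \<tau>1 (d2, d)" "r \<le> p \<tau>2 (d1, d) / p \<tau>2 (d2, d)"
  shows "r * bwd_edge E (p \<tau>2) (b \<tau>2) d2 d \<le> bwd_edge E (p \<tau>1) (b \<tau>1) d1 d"
proof -
  have "r * (p \<tau>2 (d2, d) / (p \<tau>2 (d2, d) + p \<tau>2 (d1, d)))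
      \<le> p \<tau>1 (d1, d) / (p \<tau>1 (d1, d) + p \<tau>1 (d2, d))"
    using share_le_share_of_ratio_bounds[of "p \<tau>1 (d1, d)" "p \<tau>1 (d2, d)" "p \<tau>2 (d1, d)" "p \<tau>2 (d2, d)" r]
      assms(2-) pher_pos dest_edges by (simp add: add.commute)
  then have "bbar * (r * (p \<tau>2 (d2, d) / (p \<tau>2 (d2, d) + p \<tau>2 (d1, d))))
      \<le> bbar * (p \<tau>1 (d1, d) / (p \<tau>1 (d1, d) + p \<tau>1 (d2, d)))"
    using inputs(2) by (rule mult_left_mono[OF _ less_imp_le])
  then show ?thesis by (simp add: bwd_dest_edges[OF assms(1)] mult.left_commute)
qed

lemma source_ratio_Suc:
  assumes "length P1 - 1 \<le> t" "length P2 - 1 \<le> t"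
  shows "p (Suc t) (s, s1) / p (Suc t) (s, s2) =
    (p t (s, s1) + p t (s, s1) / p t (s, s2) * fwd_edge E (p t) (f t) s s2 + (1 - path_leak l P1) *
        bwd_edge E (p (t - (length P1 - 1) + 1)) (b (t - (length P1 - 1) + 1)) d1 d) /
    (p t (s, s2) + fwd_edge E (p t) (f t) s s2 + (1 - path_leak l P2) *
        bwd_edge E (p (t - (length P2 - 1) + 1)) (b (t - (length P2 - 1) + 1)) d2 d)"
  using decay pher_pos[OF source_edges(2)] fwd_edge_ratio[where p = "p t" and u = s and w = s2 and v = s1]
    bwd_source_edge[OF paths E_def assms(1)]
    bwd_source_edge[OF two_parallel_paths_sym[OF paths] _ assms(2)] E_def
  by (simp add: pher_Suc Un_commute)

lemma source_ratio_gain: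
  assumes paths_differ: "P1 \<noteq> P2" and leak_order: "path_leak l P1 < path_leak l P2"
    and t: "length P1 - 1 \<le> t" "length P2 - 1 \<le> t"
    and \<tau>: "\<tau>1 = t - (length P1 - 1) + 1" "\<tau>2 = t - (length P2 - 1) + 1"
    and r: "0 < r" "r \<le> p t (s, s1) / p t (s, s2)"
      "r \<le> p \<tau>1 (d1, d) / p \<tau>1 (d2, d)" "r \<le> p \<tau>2 (d1, d) / p \<tau>2 (d2, d)"
    and b1_def: "b1 = bwd_edge E (p \<tau>1) (b \<tau>1) d1 d"
    and b2_def: "b2 = bwd_edge E (p \<tau>2) (b \<tau>2) d2 d"
    and f2_def: "f2 = fwd_edge E (p t) (f t) s s2"
    and a_def: "a = p t (s, s1) / p t (s, s2) / r" and \<beta>_def: "\<beta> = b1 / (b2 * r)"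
    and \<gamma>_def: "\<gamma> = (a * p t (s, s2) + a * f2 + (1 - path_leak l P1) * \<beta> * b2)
      / (p t (s, s2) + f2 + (1 - path_leak l P2) * b2)"
  shows "1 \<le> a" "1 \<le> \<beta>" "1 < \<gamma>" "p (Suc t) (s, s1) / p (Suc t) (s, s2) = r * \<gamma>"
proof -
  have b12: "r * b2 \<le> b1"
    unfolding b1_def b2_def using bwd_dest_ratio_bound[OF paths_differ r(1,3,4)] .
  have flows: "0 \<le> f2" "0 < b2" "0 \<le> 1 - path_leak l P2"
    unfolding f2_def b2_def using fwd_edge_flow_nonneg[OF source_edges(2)] bwd_dest_pos[OF paths_differ]
      one_minus_path_leak_nonneg[of P2 l] leak by auto
  have leaks: "1 - path_leak l P2 < 1 - path_leak l P1" using leak_order by simp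
  note gain = ratio_gain_factor[OF r(1) pher_pos[OF source_edges(2)] flows leaks r(2) b12 a_def \<beta>_def \<gamma>_def]
  show "1 \<le> a" "1 \<le> \<beta>" "1 < \<gamma>" "p (Suc t) (s, s1) / p (Suc t) (s, s2) = r * \<gamma>"
    using gain source_ratio_Suc[OF t, folded \<tau> b1_def b2_def f2_def] by simp_all
qed

end

theorem mainTheorem7:
  fixes E :: "('v \<times> 'v) set" and s d :: 'v and P1 P2 :: "'v list"
    and l :: "'v \<Rightarrow> real" and \<delta> fbar bbar :: real
    and p0 :: "'v \<times> 'v \<Rightarrow> real" and f0 b0 :: "'v \<Rightarrow> real"
    and p :: "nat \<Rightarrow> 'v \<times> 'v \<Rightarrow> real" and f b :: "nat \<Rightarrow> 'v \<Rightarrow> real"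
    and t :: nat
  assumes paths: "two_parallel_paths P1 P2 s d"
    and E_def: "E = path_edges P1 \<union> path_edges P2"
    and leak: "\<forall>v \<in> set P1 \<union> set P2. 0 \<le> l v \<and> l v \<le> 1"
    and decay: "0 < \<delta>" "\<delta> < 1"
    and inputs: "fbar > 0" "bbar > 0"
    and p0_pos: "\<forall>e \<in> E. p0 e > 0"
    and init_flows: "\<forall>v \<in> set P1 \<union> set P2. f0 v \<ge> 0 \<and> b0 v \<ge> 0"
    and p_def: "p = aco_pher E s d l \<delta> (\<lambda>_. fbar) (\<lambda>_. bbar) p0 f0 b0"
    and f_def: "f = aco_fwd E s d l \<delta> (\<lambda>_. fbar) (\<lambda>_. bbar) p0 f0 b0"
    and b_def: "b = aco_bwd E s d l \<delta> (\<lambda>_. fbar) (\<lambda>_. bbar) p0 f0 b0"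
    and leak_order: "path_leak l P1 < path_leak l P2"
    and t_ge: "t \<ge> max (length P1 - 1) (length P2 - 1)"
  shows
   "let m = length P1 - 1; n = length P2 - 1; L = max m n;
        s1 = P1 ! 1; s2 = P2 ! 1; d1 = P1 ! (m - 1); d2 = P2 ! (n - 1);
        r_s = (\<lambda>\<tau>. p \<tau> (s, s1) / p \<tau> (s, s2));
        r_d = (\<lambda>\<tau>. p \<tau> (d1, d) / p \<tau> (d2, d));
        r_min = Min ({r_s (t - i) | i. i < L} \<union> {r_d (t - i) | i. i < L});
        a = r_s t / r_min;
        b1 = bwd_edge E (p (t - m + 1)) (b (t - m + 1)) d1 d;
        b2 = bwd_edge E (p (t - n + 1)) (b (t - n + 1)) d2 d;
        \<beta> = b1 / (b2 * r_min);
        f2 = fwd_edge E (p t) (f t) s s2;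
        \<gamma> = (a * p t (s, s2) + a * f2 + (1 - path_leak l P1) * \<beta> * b2)
            / (p t (s, s2) + f2 + (1 - path_leak l P2) * b2)
    in a \<ge> 1 \<and> \<beta> \<ge> 1 \<and> \<gamma> > 1 \<and> r_s (Suc t) = r_min * \<gamma> \<and> r_s (Suc t) > r_min"
proof -
  interpret colony: fixed_flow_colony E s d P1 P2 l \<delta> fbar bbar p0 f0 b0 p f b
    using assms by unfold_locales auto
  define m where "m = length P1 - 1"
  define n where "n = length P2 - 1"
  have mn: "m - 1 = length P1 - 2" "n - 1 = length P2 - 2" "1 \<le> m" "1 \<le> n" "m \<le> t" "n \<le> t"
    using paths t_ge unfolding m_def n_def two_parallel_paths_def by auto
  define r_s where "r_s = (\<lambda>\<tau>. p \<tau> (s, P1 ! 1) / p \<tau> (s, P2 ! 1))"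
  define r_d where "r_d = (\<lambda>\<tau>. p \<tau> (P1 ! (m - 1), d) / p \<tau> (P2 ! (n - 1), d))"
  define r_min where "r_min = Min ({r_s (t - i) | i. i < max m n} \<union> {r_d (t - i) | i. i < max m n})"
  have pos: "0 < r_s \<tau>" "0 < r_d \<tau>" for \<tau>
    unfolding r_s_def r_d_def mn using colony.source_edges colony.dest_edges colony.pher_pos by simp_all
  have window: "0 < max m n" "m - 1 < max m n" "n - 1 < max m n" using mn by auto
  have "t - m + 1 = t - (m - 1)" "t - n + 1 = t - (n - 1)" using mn by auto
  then have r_min: "0 < r_min" "r_min \<le> r_s t" "r_min \<le> r_d (t - m + 1)" "r_min \<le> r_d (t - n + 1)"
    using window_min_pos[OF pos window(1)] window_min_le(1)[OF window(1), of r_s t r_d]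
      window_min_le(2)[OF window(2), of r_s t r_d] window_min_le(2)[OF window(3), of r_s t r_d]
    unfolding r_min_def by simp_all
  define b1 where "b1 = bwd_edge E (p (t - m + 1)) (b (t - m + 1)) (P1 ! (m - 1)) d"
  define b2 where "b2 = bwd_edge E (p (t - n + 1)) (b (t - n + 1)) (P2 ! (n - 1)) d"
  define f2 where "f2 = fwd_edge E (p t) (f t) s (P2 ! 1)"
  define a where "a = r_s t / r_min"
  define \<beta> where "\<beta> = b1 / (b2 * r_min)"
  define \<gamma> where "\<gamma> = (a * p t (s, P2 ! 1) + a * f2 + (1 - path_leak l P1) * \<beta> * b2)
    / (p t (s, P2 ! 1) + f2 + (1 - path_leak l P2) * b2)"
  have "P1 \<noteq> P2" "length P1 - 1 \<le> t" "length P2 - 1 \<le> t" using leak_order t_ge by auto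
  note gain = colony.source_ratio_gain[OF this(1) leak_order this(2,3) refl refl r_min(1)
      r_min(2)[unfolded r_s_def] r_min(3,4)[unfolded r_d_def, unfolded mn(1,2), unfolded m_def n_def]
      b1_def[unfolded mn(1), unfolded m_def] b2_def[unfolded mn(2), unfolded n_def] f2_def
      a_def[unfolded r_s_def] \<beta>_def \<gamma>_def]
  have "1 \<le> a \<and> 1 \<le> \<beta> \<and> 1 < \<gamma> \<and> r_s (Suc t) = r_min * \<gamma> \<and> r_min < r_s (Suc t)"
    using gain r_min(1) unfolding r_s_def by simp
  then show ?thesis
    unfolding Let_def \<gamma>_def \<beta>_def a_def b1_def b2_def f2_def r_min_def r_s_def r_d_def m_def n_def .
qed

end
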